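(* Consider the family of single-server discrete-time queues described in the context, indexed by $\epsilon\in(0,\mu)$. Let $\bar q^{(\epsilon)}$ be a random variable distributed according to the stationary distribution of $\{q^{(\epsilon)}(t)\}_{t\ge0}$. Let $Z^{(\epsilon)}$ be an exponential random variable with rate $\frac{2}{(\sigma_a^{(\epsilon)})^2+\sigma_s^2}$, i.e. with mean $\frac{(\sigma_a^{(\epsilon)})^2+\sigma_s^2}{2}$. Then there exists a constant $K<\infty$, independent of $\epsilon$, such that for every $\epsilon\in(0,\mu)$, $$d_W\big(\epsilon\,\bar q^{(\epsilon)},\,Z^{(\epsilon)}\big)\le K\epsilon .$$
   Context: Wasserstein distance: for real-valued random variables $X,Y$, $d_W(X,Y)=\sup_{h\in \mathrm{Lip}(1)}|\mathbb E[h(X)]-\mathbb E[h(Y)]|$, where $\mathrm{Lip}(1)$ is the set of functions $h:\mathbb R\to\mathbb R$ with $|h(x)-h(y)|\le|x-y|$. Single-server queue: time is slotted. The queue length evolves as $q(t+1)=q(t)+a(t)-s(t)+u(t)$, where $u(t)=\max(s(t)-a(t)-q(t),0)$ is the unused service, and $q(0)$ is a nonnegative integer. The arrivals $\{a(t)\}_t$ are i.i.d. nonnegative integer-valued, the services $\{s(t)\}_t$ are i.i.d. nonnegative integer-valued, and the arrival and service sequences are independent of each other and of the past queue lengths. The service law is fixed with mean $\mu>0$ and variance $\sigma_s^2$. For each $\epsilon\in(0,\mu)$ the arrival law (denoted $a^{(\epsilon)}(t)$) has mean $\lambda^{(\epsilon)}=\mu-\epsilon$ and variance $(\sigma_a^{(\epsilon)})^2$.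 There are constants $A_{max},S_{max}<\infty$ independent of $\epsilon$ with $a^{(\epsilon)}(t)\le A_{max}$ and $s(t)\le S_{max}$ almost surely. There is a constant $c_0>0$ with $(\sigma_a^{(\epsilon)})^2+\sigma_s^2\ge c_0$ for all $\epsilon$. For each $\epsilon$ the Markov chain $\{q^{(\epsilon)}(t)\}$ is assumed to be positive recurrent with a stationary distribution. *)

theory Defs
  imports "HOL-Probability.Probability"
begin

text \<open>One step of the queue: q(t+1) = q(t) + a(t) - s(t) + u(t) with
  u(t) = max(s(t) - a(t) - q(t), 0), i.e. q(t+1) = max(q(t)+a(t)-s(t), 0),
  which is truncated subtraction on nat.\<close>
definition queue_step :: "nat pmf \<Rightarrow> nat pmf \<Rightarrow> nat \<Rightarrow> nat pmf" where
  "queue_step A S q = map_pmf (\<lambda>(x, y). q + x - y) (pair_pmf A S)"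

definition stationary_queue :: "nat pmf \<Rightarrow> nat pmf \<Rightarrow> nat pmf \<Rightarrow> bool" where
  "stationary_queue A S p \<longleftrightarrow> bind_pmf p (queue_step A S) = p"

definition wasserstein :: "real measure \<Rightarrow> real measure \<Rightarrow> ereal" where
  "wasserstein M N = (SUP h \<in> {h :: real \<Rightarrow> real. \<forall>x y. \<bar>h x - h y\<bar> \<le> \<bar>x - y\<bar>}.
      ereal \<bar>(\<integral>x. h x \<partial>M) - (\<integral>x. h x \<partial>N)\<bar>)"

end

theory Submission
  imports Defs
begin

text \<open>Stein's method combined with the drift method. For a 1-Lipschitz \<open>h\<close>, the solution \<open>g\<close>
  of the Stein equation \<open>g'(x)/\<lambda> - g(x) = h(x) - E h(Z)\<close>, \<open>Z \<sim> Exp(\<lambda>)\<close>, grows at most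
  linearly and has a bounded, Lipschitz derivative. In stationarity the potential
  \<open>F(n) = \<Sum>\<^sub>j\<^sub><\<^sub>n g(\<epsilon> j)\<close> has zero mean drift. Expanding that drift to second order (the
  increments are bounded by \<open>Amax + Smax\<close>, have mean \<open>-\<epsilon>\<close> away from the boundary and second
  moment \<open>\<sigma>\<^sub>a\<^sup>2 + \<sigma>\<^sub>s\<^sup>2 + \<epsilon>\<^sup>2 = 2/\<lambda> + \<epsilon>\<^sup>2\<close>) gives \<open>\<epsilon> (h(\<epsilon> q) - E h(Z))\<close> up to \<open>O(\<epsilon>\<^sup>2)\<close> plus
  terms proportional to the unused service, whose stationary mean is exactly \<open>\<epsilon>\<close>. The moments
  needed to integrate come from the same drift argument applied to truncated test functions.\<close>

section \<open>Expectations under the exponential law\<close>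

definition exp_expectation :: "real \<Rightarrow> (real \<Rightarrow> real) \<Rightarrow> real" where
  "exp_expectation l k = (\<integral>t. exponential_density l t * k t \<partial>lborel)"

lemma has_bochner_integral_exponential_moment:
  assumes "0 < l"
  shows "has_bochner_integral lborel (\<lambda>x. exponential_density l x * x ^ i) (fact i / l ^ i)"
proof (rule has_bochner_integral_nn_integral)
  show "AE x in lborel. 0 \<le> exponential_density l x * x ^ i"
    using assms by (auto simp: exponential_density_def)
  show "(\<integral>\<^sup>+ x. ennreal (exponential_density l x * x ^ i) \<partial>lborel) = ennreal (fact i / l ^ i)"
    using nn_integral_erlang_ith_moment[OF assms, of 0 i] by simp
qed (use assms in auto)

lemma integrable_exponential_density: "0 < l \<Longrightarrow> integrable lborel (exponential_density l)"
  using has_bochner_integral_exponential_moment[of l 0] by (simp add: has_bochner_integral_iff)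

lemma integrable_exponential_density_mult_id:
  "0 < l \<Longrightarrow> integrable lborel (\<lambda>x. exponential_density l x * x)"
  using has_bochner_integral_exponential_moment[of l 1] by (simp add: has_bochner_integral_iff)

lemma integral_exponential_density: "0 < l \<Longrightarrow> (\<integral>x. exponential_density l x \<partial>lborel) = 1"
  using has_bochner_integral_exponential_moment[of l 0] by (auto dest: has_bochner_integral_integral_eq)

lemma integral_exponential_density_mult_id:
  "0 < l \<Longrightarrow> (\<integral>x. exponential_density l x * x \<partial>lborel) = 1 / l"
  using has_bochner_integral_exponential_moment[of l 1] by (auto dest: has_bochner_integral_integral_eq)

lemma exponential_density_mult_le:
  assumes "0 < l" and "\<And>t. \<bar>k t\<bar> \<le> A + B * \<bar>t\<bar>"
  shows "\<bar>exponential_density l t * k t\<bar> \<le> A * exponential_density l t + B * (exponential_density l t * t)"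
proof -
  have f0: "0 \<le> exponential_density l t" using assms(1) by (simp add: exponential_density_nonneg)
  have "\<bar>exponential_density l t * k t\<bar> = exponential_density l t * \<bar>k t\<bar>" using f0 by (simp add: abs_mult)
  also have "\<dots> \<le> exponential_density l t * (A + B * \<bar>t\<bar>)" using f0 assms(2)[of t] by (simp add: mult_left_mono)
  also have "\<dots> = A * exponential_density l t + B * (exponential_density l t * t)"
    by (cases "t < 0") (auto simp: exponential_density_def algebra_simps)
  finally show ?thesis .
qed

lemma integrable_exp_expectation:
  assumes l: "0 < l" and k: "k \<in> borel_measurable borel" and growth: "\<And>t. \<bar>k t\<bar> \<le> A + B * \<bar>t\<bar>"
  shows "integrable lborel (\<lambda>t. exponential_density l t * k t)"
proof (rule Bochner_Integration.integrable_bound)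
  show "integrable lborel (\<lambda>t. A * exponential_density l t + B * (exponential_density l t * t))"
    using integrable_exponential_density[OF l] integrable_exponential_density_mult_id[OF l] by auto
  show "(\<lambda>t. exponential_density l t * k t) \<in> borel_measurable lborel" using k by measurable
  show "AE t in lborel. norm (exponential_density l t * k t)
      \<le> norm (A * exponential_density l t + B * (exponential_density l t * t))"
    using exponential_density_mult_le[OF l growth] by (intro AE_I2) (smt (verit) real_norm_def)
qed

lemma abs_exp_expectation_le:
  assumes l: "0 < l" and k: "k \<in> borel_measurable borel" and growth: "\<And>t. \<bar>k t\<bar> \<le> A + B * \<bar>t\<bar>"
  shows "\<bar>exp_expectation l k\<bar> \<le> A + B / l"
proof -
  have "\<bar>exp_expectation l k\<bar> \<le> (\<integral>t. \<bar>exponential_density l t * k t\<bar> \<partial>lborel)"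
    unfolding exp_expectation_def by (rule integral_abs_bound)
  also have "\<dots> \<le> (\<integral>t. A * exponential_density l t + B * (exponential_density l t * t) \<partial>lborel)"
    using integrable_exp_expectation[OF l k growth] exponential_density_mult_le[OF l growth]
      integrable_exponential_density[OF l] integrable_exponential_density_mult_id[OF l]
    by (intro integral_mono) auto
  also have "\<dots> = A + B / l"
    using integrable_exponential_density[OF l] integrable_exponential_density_mult_id[OF l]
      integral_exponential_density[OF l] integral_exponential_density_mult_id[OF l] by simp
  finally show ?thesis .
qed

lemma exp_expectation_const: "0 < l \<Longrightarrow> exp_expectation l (\<lambda>_. c) = c"
  unfolding exp_expectation_def
  using integral_exponential_density[of l] integrable_exponential_density[of l] by simp

lemma exp_expectation_diff:
  "integrable lborel (\<lambda>t. exponential_density l t * k1 t) \<Longrightarrow>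
   integrable lborel (\<lambda>t. exponential_density l t * k2 t) \<Longrightarrow>
   exp_expectation l (\<lambda>t. k1 t - k2 t) = exp_expectation l k1 - exp_expectation l k2"
  unfolding exp_expectation_def by (simp add: right_diff_distrib)

lemma integral_exponential_density_eq_exp_expectation:
  "0 < l \<Longrightarrow> k \<in> borel_measurable borel \<Longrightarrow>
   (\<integral>x. k x \<partial>density lborel (exponential_density l)) = exp_expectation l k"
  unfolding exp_expectation_def by (subst integral_density) (auto simp: exponential_density_nonneg)

text \<open>Memorylessness: shifting by \<open>\<delta>\<close> rescales the density by \<open>e\<^sup>\<lambda>\<^sup>\<delta>\<close> on \<open>[\<delta>,\<infinity>)\<close>; the mass
  lost on \<open>[0,\<delta>)\<close> is \<open>O(\<lambda> \<delta>\<^sup>2)\<close> for \<open>k\<close> vanishing linearly at \<open>0\<close>.\<close>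
lemma exp_expectation_shift:
  assumes l: "0 < l" and k: "k \<in> borel_measurable borel" and growth: "\<And>t. \<bar>k t\<bar> \<le> \<bar>t\<bar>"
    and d: "0 \<le> \<delta>"
  shows "\<exists>R. exp_expectation l (\<lambda>t. k (\<delta> + t)) = exp (l * \<delta>) * (exp_expectation l k - R)
    \<and> \<bar>R\<bar> \<le> l * \<delta>\<^sup>2"
proof -
  let ?f = "exponential_density l"
  define R where "R = (\<integral>s. ?f s * k s * indicator {..<\<delta>} s \<partial>lborel)"
  have ik: "integrable lborel (\<lambda>t. ?f t * k t)"
    by (rule integrable_exp_expectation[OF l k, of 0 1]) (use growth in auto)
  have "integrable lborel (\<lambda>s. ?f s * (k s * indicator {..<\<delta>} s))"
    by (rule integrable_exp_expectation[OF l, of _ 0 1])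
      (use k growth in \<open>auto simp: indicator_def\<close>)
  then have iR: "integrable lborel (\<lambda>s. ?f s * k s * indicator {..<\<delta>} s)" by (simp add: mult.assoc)
  have shifted: "?f (s - \<delta>) * k s = exp (l * \<delta>) * (?f s * k s - ?f s * k s * indicator {..<\<delta>} s)" for s
  proof (cases "s < \<delta>")
    case False
    then have "exp (- (s - \<delta>) * l) = exp (l * \<delta>) * exp (- s * l)"
      by (simp add: exp_add[symmetric] algebra_simps)
    then show ?thesis using False d by (auto simp: exponential_density_def indicator_def)
  qed (use d in \<open>auto simp: exponential_density_def indicator_def\<close>)
  have "exp_expectation l (\<lambda>t. k (\<delta> + t)) = (\<integral>s. ?f (s - \<delta>) * k s \<partial>lborel)"
    unfolding exp_expectation_def using lborel_integral_real_affine[of 1 "\<lambda>s. ?f (s - \<delta>) * k s" \<delta>]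
    by simp
  also have "\<dots> = exp (l * \<delta>) * (exp_expectation l k - R)"
    unfolding shifted exp_expectation_def R_def using ik iR by simp
  finally have eq: "exp_expectation l (\<lambda>t. k (\<delta> + t)) = exp (l * \<delta>) * (exp_expectation l k - R)" .
  have "\<bar>R\<bar> \<le> (\<integral>s. \<bar>?f s * k s * indicator {..<\<delta>} s\<bar> \<partial>lborel)"
    unfolding R_def by (rule integral_abs_bound)
  also have "\<dots> \<le> (\<integral>s. (l * \<delta>) * indicator {0..\<delta>} s \<partial>lborel)"
  proof (rule integral_mono)
    show "integrable lborel (\<lambda>s. (l * \<delta>) * indicator {0..\<delta>} s :: real)"
      by (intro integrable_mult_right integrable_real_indicator) (auto simp: emeasure_lborel_Icc_eq)
    fix s
    show "\<bar>?f s * k s * indicator {..<\<delta>} s\<bar> \<le> (l * \<delta>) * indicator {0..\<delta>} s"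
    proof (cases "0 \<le> s \<and> s < \<delta>")
      case True
      have "\<bar>?f s\<bar> \<le> l" using True l by (auto simp: exponential_density_def)
      moreover have "\<bar>k s\<bar> \<le> \<delta>" using growth[of s] True by simp
      ultimately have "\<bar>?f s * k s\<bar> \<le> l * \<delta>" by (simp add: abs_mult mult_mono')
      then show ?thesis using True by (simp add: indicator_def)
    qed (use d l in \<open>auto simp: indicator_def exponential_density_def\<close>)
  qed (use iR in auto)
  also have "\<dots> = l * \<delta>\<^sup>2" using d by (simp add: power2_eq_square)
  finally show ?thesis using eq by blast
qed

lemma lipschitz1_iff_abs: "1-lipschitz_on UNIV h \<longleftrightarrow> (\<forall>x y. \<bar>h x - h y\<bar> \<le> \<bar>x - y\<bar>)"
  for h :: "real \<Rightarrow> real"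
  by (simp add: lipschitz_on_def dist_real_def)

lemma lipschitz1_abs_le: "1-lipschitz_on UNIV h \<Longrightarrow> \<bar>h x - h y\<bar> \<le> \<bar>x - y\<bar>"
  for h :: "real \<Rightarrow> real"
  by (simp add: lipschitz1_iff_abs)

lemma lipschitz1_borel_measurable: "1-lipschitz_on UNIV h \<Longrightarrow> h \<in> borel_measurable borel"
  for h :: "real \<Rightarrow> real"
  by (intro borel_measurable_continuous_onI lipschitz_on_continuous_on)

lemma lipschitz1_shift: "1-lipschitz_on UNIV h \<Longrightarrow> 1-lipschitz_on UNIV (\<lambda>t. h (x + t))"
  for h :: "real \<Rightarrow> real"
  by (simp add: lipschitz1_iff_abs) (metis add_diff_cancel_left)

lemma wasserstein_le_of_lipschitz1_bound:
  assumes "\<And>h. 1-lipschitz_on UNIV h \<Longrightarrow> \<bar>(\<integral>x. h x \<partial>M) - (\<integral>x. h x \<partial>N)\<bar> \<le> c"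
  shows "wasserstein M N \<le> ereal c"
  unfolding wasserstein_def by (rule SUP_least) (use assms in \<open>auto simp: lipschitz1_iff_abs\<close>)

lemma integrable_exp_expectation_lipschitz1:
  assumes "0 < l" and "1-lipschitz_on UNIV h"
  shows "integrable lborel (\<lambda>t. exponential_density l t * h t)"
proof (rule integrable_exp_expectation[OF assms(1) lipschitz1_borel_measurable[OF assms(2)]])
  show "\<bar>h t\<bar> \<le> \<bar>h 0\<bar> + 1 * \<bar>t\<bar>" for t
    using lipschitz1_abs_le[OF assms(2), of t 0] by linarith
qed

section \<open>The Stein equation for the exponential law\<close>

lemma exp_minus_one_minus_le:
  fixes u :: real
  assumes u: "0 \<le> u"
  shows "exp u - 1 - u \<le> u\<^sup>2 * exp u"
proof -
  have "exp u * (1 - u) \<le> exp u * exp (-u)"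
    using exp_ge_add_one_self[of "-u"] by (simp add: mult_left_mono)
  then have a: "exp u - 1 \<le> u * exp u" by (simp add: exp_minus_inverse algebra_simps)
  then have "exp u - 1 - u \<le> u * (exp u - 1)" by (simp add: algebra_simps)
  also have "\<dots> \<le> u * (u * exp u)" using a u by (simp add: mult_left_mono)
  finally show ?thesis by (simp add: power2_eq_square algebra_simps)
qed

definition shifted_exp_expectation :: "real \<Rightarrow> (real \<Rightarrow> real) \<Rightarrow> real \<Rightarrow> real" where
  "shifted_exp_expectation l h x = exp_expectation l (\<lambda>t. h (x + t))"

definition stein_solution :: "real \<Rightarrow> (real \<Rightarrow> real) \<Rightarrow> real \<Rightarrow> real" where
  "stein_solution l h x = shifted_exp_expectation l h 0 - shifted_exp_expectation l h x"

text \<open>With \<open>H(x) = E h(x + Z)\<close> one has \<open>H' = \<lambda> (H - h)\<close>, so this is the derivative of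
  \<open>stein_solution\<close>; only the Taylor estimates below are used, never differentiability.\<close>
definition stein_derivative :: "real \<Rightarrow> (real \<Rightarrow> real) \<Rightarrow> real \<Rightarrow> real" where
  "stein_derivative l h x = l * (h x - shifted_exp_expectation l h x)"

context
  fixes l :: real and h :: "real \<Rightarrow> real"
  assumes l: "0 < l" and h: "1-lipschitz_on UNIV h"
begin

private lemma integrable_shift: "integrable lborel (\<lambda>t. exponential_density l t * h (x + t))"
  using integrable_exp_expectation_lipschitz1[OF l lipschitz1_shift[OF h]] .

private lemma integrable_const: "integrable lborel (\<lambda>t. exponential_density l t * c)"
  using integrable_exponential_density[OF l] by simp

lemma shifted_exp_expectation_lipschitz:
  "\<bar>shifted_exp_expectation l h x - shifted_exp_expectation l h y\<bar> \<le> \<bar>x - y\<bar>"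
proof -
  have "shifted_exp_expectation l h x - shifted_exp_expectation l h y
      = exp_expectation l (\<lambda>t. h (x + t) - h (y + t))"
    unfolding shifted_exp_expectation_def using exp_expectation_diff[OF integrable_shift integrable_shift]
    by simp
  also have "\<bar>\<dots>\<bar> \<le> \<bar>x - y\<bar> + 0 / l"
  proof (rule abs_exp_expectation_le[OF l])
    show "(\<lambda>t. h (x + t) - h (y + t)) \<in> borel_measurable borel"
      by (intro borel_measurable_diff lipschitz1_borel_measurable[OF lipschitz1_shift[OF h]])
    show "\<bar>h (x + t) - h (y + t)\<bar> \<le> \<bar>x - y\<bar> + 0 * \<bar>t\<bar>" for t
      using lipschitz1_abs_le[OF h, of "x + t" "y + t"] by simp
  qed
  finally show ?thesis by simp
qed

lemma abs_sub_shifted_exp_expectation_le: "\<bar>h x - shifted_exp_expectation l h x\<bar> \<le> 1 / l"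
proof -
  have "h x - shifted_exp_expectation l h x = exp_expectation l (\<lambda>t. h x - h (x + t))"
    unfolding shifted_exp_expectation_def
    using exp_expectation_diff[OF integrable_const integrable_shift] exp_expectation_const[OF l] by simp
  also have "\<bar>\<dots>\<bar> \<le> 0 + 1 / l"
  proof (rule abs_exp_expectation_le[OF l])
    show "(\<lambda>t. h x - h (x + t)) \<in> borel_measurable borel"
      by (intro borel_measurable_diff lipschitz1_borel_measurable[OF lipschitz1_shift[OF h]]) auto
    show "\<bar>h x - h (x + t)\<bar> \<le> 0 + 1 * \<bar>t\<bar>" for t
      using lipschitz1_abs_le[OF h, of x "x + t"] by simp
  qed
  finally show ?thesis by simp
qed

lemma abs_stein_derivative_le: "\<bar>stein_derivative l h x\<bar> \<le> 1"
proof -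
  have "\<bar>stein_derivative l h x\<bar> = l * \<bar>h x - shifted_exp_expectation l h x\<bar>"
    unfolding stein_derivative_def using l by (simp add: abs_mult)
  also have "\<dots> \<le> l * (1 / l)"
    using abs_sub_shifted_exp_expectation_le[of x] l by (intro mult_left_mono) auto
  finally show ?thesis using l by simp
qed

lemma stein_derivative_lipschitz:
  "\<bar>stein_derivative l h x - stein_derivative l h y\<bar> \<le> 2 * l * \<bar>x - y\<bar>"
proof -
  have "\<bar>(h x - shifted_exp_expectation l h x) - (h y - shifted_exp_expectation l h y)\<bar> \<le> 2 * \<bar>x - y\<bar>"
    using lipschitz1_abs_le[OF h, of x y] shifted_exp_expectation_lipschitz[of x y] by (smt (verit))
  then show ?thesis
    unfolding stein_derivative_def using l
    by (simp add: abs_mult right_diff_distrib[symmetric] mult_left_mono)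
qed

lemma abs_stein_solution_le: "\<bar>stein_solution l h x\<bar> \<le> \<bar>x\<bar>"
  using shifted_exp_expectation_lipschitz[of 0 x] unfolding stein_solution_def by simp

lemma stein_equation: "stein_derivative l h x / l - stein_solution l h x = h x - exp_expectation l h"
  using l unfolding stein_derivative_def stein_solution_def shifted_exp_expectation_def by simp

lemma stein_solution_taylor_right:
  assumes d: "0 \<le> \<delta>" "\<delta> \<le> D" and lT: "l \<le> T"
  shows "\<bar>stein_solution l h (x + \<delta>) - stein_solution l h x - stein_derivative l h x * \<delta>\<bar>
    \<le> 2 * T * exp (T * D) * \<delta>\<^sup>2"
proof -
  define k where "k t = h (x + t) - h x" for t
  have k_growth: "\<bar>k t\<bar> \<le> \<bar>t\<bar>" for t unfolding k_def using lipschitz1_abs_le[OF h, of "x + t" x] by simp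
  have k_meas: "k \<in> borel_measurable borel" unfolding k_def
    by (intro borel_measurable_diff lipschitz1_borel_measurable[OF lipschitz1_shift[OF h]]) auto
  obtain R where R: "exp_expectation l (\<lambda>t. k (\<delta> + t)) = exp (l * \<delta>) * (exp_expectation l k - R)"
    "\<bar>R\<bar> \<le> l * \<delta>\<^sup>2"
    using exp_expectation_shift[OF l k_meas k_growth d(1)] by blast
  have J1: "exp_expectation l k = shifted_exp_expectation l h x - h x"
    unfolding k_def shifted_exp_expectation_def
    using exp_expectation_diff[OF integrable_shift integrable_const] exp_expectation_const[OF l] by simp
  have J2: "exp_expectation l (\<lambda>t. k (\<delta> + t)) = shifted_exp_expectation l h (x + \<delta>) - h x"
    unfolding k_def shifted_exp_expectation_def
    using exp_expectation_diff[OF integrable_shift[of "x + \<delta>"] integrable_const]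
      exp_expectation_const[OF l] by (simp add: add.assoc)
  have Jk: "\<bar>exp_expectation l k\<bar> \<le> 1 / l"
    using abs_exp_expectation_le[OF l k_meas, of 0 1] k_growth by simp
  define u where "u = l * \<delta>"
  have u0: "0 \<le> u" using l d unfolding u_def by simp
  have "stein_solution l h (x + \<delta>) - stein_solution l h x - stein_derivative l h x * \<delta>
      = -(exp_expectation l (\<lambda>t. k (\<delta> + t)) - (1 + u) * exp_expectation l k)"
    unfolding stein_solution_def stein_derivative_def J1 J2 u_def by (simp add: algebra_simps)
  also have "\<dots> = exp u * R - (exp u - 1 - u) * exp_expectation l k"
    unfolding R(1) u_def by (simp add: algebra_simps)
  finally have expansion: "stein_solution l h (x + \<delta>) - stein_solution l h x - stein_derivative l h x * \<delta>
      = exp u * R - (exp u - 1 - u) * exp_expectation l k" .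
  have "\<bar>(exp u - 1 - u) * exp_expectation l k\<bar> \<le> l * \<delta>\<^sup>2 * exp u"
  proof -
    have "\<bar>(exp u - 1 - u) * exp_expectation l k\<bar> \<le> (u\<^sup>2 * exp u) * (1 / l)"
    proof -
      have "0 \<le> exp u - 1 - u" using exp_ge_add_one_self[of u] by linarith
      then show ?thesis
        unfolding abs_mult using exp_minus_one_minus_le[OF u0] Jk by (intro mult_mono) auto
    qed
    also have "\<dots> = l * \<delta>\<^sup>2 * exp u" unfolding u_def using l by (simp add: power2_eq_square)
    finally show ?thesis .
  qed
  moreover have "\<bar>exp u * R\<bar> \<le> l * \<delta>\<^sup>2 * exp u"
    using R(2) by (simp add: abs_mult mult_left_mono mult.commute)
  ultimately have "\<bar>exp u * R - (exp u - 1 - u) * exp_expectation l k\<bar> \<le> 2 * (l * \<delta>\<^sup>2 * exp u)"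
    by linarith
  also have "\<dots> \<le> 2 * (T * \<delta>\<^sup>2 * exp (T * D))"
    unfolding u_def using l lT d by (intro mult_left_mono mult_mono exp_mono) auto
  finally show ?thesis unfolding expansion by (simp add: algebra_simps)
qed

lemma stein_solution_taylor:
  assumes d: "\<bar>y - x\<bar> \<le> D" and lT: "l \<le> T"
  shows "\<bar>stein_solution l h y - stein_solution l h x - stein_derivative l h x * (y - x)\<bar>
    \<le> (2 * T * exp (T * D) + 2 * T) * (y - x)\<^sup>2"
proof (cases "x \<le> y")
  case True
  have "0 \<le> 2 * T * (y - x)\<^sup>2" using l lT by simp
  then show ?thesis
    using stein_solution_taylor_right[of "y - x" D T x] True d lT by (simp add: algebra_simps)
next
  case False
  have fwd: "\<bar>stein_solution l h x - stein_solution l h y - stein_derivative l h y * (x - y)\<bar>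
      \<le> 2 * T * exp (T * D) * (x - y)\<^sup>2"
    using stein_solution_taylor_right[of "x - y" D T y] False d lT by simp
  have "\<bar>(stein_derivative l h x - stein_derivative l h y) * (x - y)\<bar> \<le> (2 * l * \<bar>x - y\<bar>) * \<bar>x - y\<bar>"
    unfolding abs_mult by (intro mult_right_mono stein_derivative_lipschitz) auto
  also have "\<dots> \<le> 2 * T * (x - y)\<^sup>2" using lT l by (simp add: power2_eq_square mult_right_mono)
  finally have "\<bar>(stein_derivative l h x - stein_derivative l h y) * (x - y)\<bar> \<le> 2 * T * (x - y)\<^sup>2" .
  with fwd show ?thesis by (simp add: power2_commute algebra_simps)
qed

end

definition queue_step_mean :: "nat pmf \<Rightarrow> nat pmf \<Rightarrow> (nat \<Rightarrow> real) \<Rightarrow> nat \<Rightarrow> real" where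
  "queue_step_mean A S \<phi> n = (\<integral>z. \<phi> (n + fst z - snd z) \<partial>pair_pmf A S)"

lemma integrable_pair_pmf_finite:
  "finite (set_pmf A) \<Longrightarrow> finite (set_pmf S) \<Longrightarrow> integrable (measure_pmf (pair_pmf A S)) (f :: _ \<Rightarrow> real)"
  by (rule integrable_measure_pmf_finite) simp

lemma queue_step_mean_add:
  "finite (set_pmf A) \<Longrightarrow> finite (set_pmf S) \<Longrightarrow>
   queue_step_mean A S (\<lambda>n. f n + g n) n = queue_step_mean A S f n + queue_step_mean A S g n"
  unfolding queue_step_mean_def
  by (rule Bochner_Integration.integral_add) (auto intro: integrable_pair_pmf_finite)

lemma stationary_integral_queue_step_mean_nonneg:
  assumes stat: "stationary_queue A S p" and fin: "finite (set_pmf A)" "finite (set_pmf S)"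
    and nonneg: "\<And>n. 0 \<le> \<phi> n" and int: "integrable (measure_pmf p) \<phi>"
  shows "integrable (measure_pmf p) (queue_step_mean A S \<phi>)
    \<and> (\<integral>n. queue_step_mean A S \<phi> n \<partial>p) = (\<integral>n. \<phi> n \<partial>p)"
proof -
  have step_nonneg: "0 \<le> queue_step_mean A S \<phi> n" for n
    unfolding queue_step_mean_def by (intro integral_nonneg_AE) (use nonneg in auto)
  have step: "(\<integral>\<^sup>+y. ennreal (\<phi> y) \<partial>queue_step A S n) = ennreal (queue_step_mean A S \<phi> n)" for n
  proof -
    have "(\<integral>\<^sup>+y. ennreal (\<phi> y) \<partial>queue_step A S n)
        = (\<integral>\<^sup>+z. ennreal (\<phi> (n + fst z - snd z)) \<partial>pair_pmf A S)"
      unfolding queue_step_def by (simp add: case_prod_beta)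
    also have "\<dots> = ennreal (queue_step_mean A S \<phi> n)"
      unfolding queue_step_mean_def
      by (rule nn_integral_eq_integral[OF integrable_pair_pmf_finite[OF fin]]) (use nonneg in auto)
    finally show ?thesis .
  qed
  have "ennreal (\<integral>n. \<phi> n \<partial>p) = (\<integral>\<^sup>+n. ennreal (\<phi> n) \<partial>p)"
    by (rule nn_integral_eq_integral[symmetric, OF int]) (use nonneg in auto)
  also have "\<dots> = (\<integral>\<^sup>+n. ennreal (\<phi> n) \<partial>bind_pmf p (queue_step A S))"
    using stat unfolding stationary_queue_def by simp
  also have "\<dots> = (\<integral>\<^sup>+n. ennreal (queue_step_mean A S \<phi> n) \<partial>p)"
    by (simp add: step)
  finally have eq: "(\<integral>\<^sup>+n. ennreal (queue_step_mean A S \<phi> n) \<partial>p) = ennreal (\<integral>n. \<phi> n \<partial>p)" ..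
  have int_step: "integrable (measure_pmf p) (queue_step_mean A S \<phi>)"
    by (rule integrableI_nonneg) (use step_nonneg eq in auto)
  have "ennreal (\<integral>n. queue_step_mean A S \<phi> n \<partial>p) = ennreal (\<integral>n. \<phi> n \<partial>p)"
    using nn_integral_eq_integral[OF int_step] step_nonneg eq by simp
  then have "(\<integral>n. queue_step_mean A S \<phi> n \<partial>p) = (\<integral>n. \<phi> n \<partial>p)"
    by (subst (asm) ennreal_inj) (auto intro!: integral_nonneg_AE simp: step_nonneg nonneg)
  with int_step show ?thesis by blast
qed

text \<open>Split \<open>\<phi> = (\<phi> + B) - B\<close> into nonnegative parts, for which Tonelli applies.\<close>
lemma stationary_integral_queue_step_mean:
  assumes stat: "stationary_queue A S p" and fin: "finite (set_pmf A)" "finite (set_pmf S)"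
    and bound: "\<And>n. \<bar>\<phi> n\<bar> \<le> B n" and int: "integrable (measure_pmf p) B"
  shows "integrable (measure_pmf p) (queue_step_mean A S \<phi>)
    \<and> (\<integral>n. queue_step_mean A S \<phi> n \<partial>p) = (\<integral>n. \<phi> n \<partial>p)"
proof -
  have int_\<phi>: "integrable (measure_pmf p) \<phi>"
    by (rule Bochner_Integration.integrable_bound[OF int])
      (use bound in \<open>auto intro!: AE_I2 intro: order_trans[OF _ abs_ge_self]\<close>)
  have int_sum: "integrable (measure_pmf p) (\<lambda>n. \<phi> n + B n)" using int_\<phi> int by simp
  have B: "integrable (measure_pmf p) (queue_step_mean A S B)
      \<and> (\<integral>n. queue_step_mean A S B n \<partial>p) = (\<integral>n. B n \<partial>p)"
    by (rule stationary_integral_queue_step_mean_nonneg[OF stat fin _ int])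
      (use bound in \<open>auto intro: order_trans[OF abs_ge_zero]\<close>)
  have \<phi>B: "integrable (measure_pmf p) (queue_step_mean A S (\<lambda>n. \<phi> n + B n))
      \<and> (\<integral>n. queue_step_mean A S (\<lambda>n. \<phi> n + B n) n \<partial>p) = (\<integral>n. \<phi> n + B n \<partial>p)"
    by (rule stationary_integral_queue_step_mean_nonneg[OF stat fin _ int_sum])
      (use bound in \<open>smt (verit)\<close>)
  have split: "queue_step_mean A S \<phi> n
      = queue_step_mean A S (\<lambda>n. \<phi> n + B n) n - queue_step_mean A S B n" for n
    using queue_step_mean_add[OF fin, of \<phi> B n] by simp
  have "(\<integral>n. queue_step_mean A S \<phi> n \<partial>p)
      = (\<integral>n. queue_step_mean A S (\<lambda>n. \<phi> n + B n) n \<partial>p) - (\<integral>n. queue_step_mean A S B n \<partial>p)"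
    unfolding split using B \<phi>B by (intro Bochner_Integration.integral_diff) auto
  also have "\<dots> = (\<integral>n. \<phi> n \<partial>p)" using B \<phi>B int_\<phi> int by simp
  finally show ?thesis unfolding split[abs_def] using B \<phi>B by auto
qed

lemma sum_lessThan_of_nat: "(\<Sum>i<m. real i) = real m * (real m - 1) / 2"
  by (induction m) (auto simp: algebra_simps)

lemma sum_lessThan_add_diff:
  fixes w :: "nat \<Rightarrow> real"
  shows "sum w {..<b + m} - sum w {..<b} = (\<Sum>i<m. w (b + i))"
  by (induction m) (simp_all add: algebra_simps)

lemma partial_sum_taylor:
  fixes w :: "nat \<Rightarrow> real"
  assumes near: "\<And>j. min n n' \<le> j \<Longrightarrow> j < max n n' \<Longrightarrow> \<bar>w j - w n - \<beta> * (real j - real n)\<bar> \<le> E"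
  shows "\<bar>sum w {..<n'} - sum w {..<n} - (real n' - real n) * w n
      - \<beta> * ((real n' - real n) * (real n' - real n - 1) / 2)\<bar> \<le> \<bar>real n' - real n\<bar> * E"
proof (cases "n \<le> n'")
  case True
  define m where "m = n' - n"
  have n': "n' = n + m" using True m_def by simp
  have "sum w {..<n'} - sum w {..<n} - (real n' - real n) * w n
      - \<beta> * ((real n' - real n) * (real n' - real n - 1) / 2)
      = (\<Sum>i<m. w (n + i) - w n - \<beta> * real i)"
    unfolding n' sum_lessThan_add_diff
    by (simp add: sum_subtractf sum_distrib_left[symmetric] sum_lessThan_of_nat)
  also have "\<bar>\<dots>\<bar> \<le> (\<Sum>i<m. E)"
    using near[of "n + _"] n' by (intro order_trans[OF sum_abs] sum_mono) auto
  also have "\<dots> = \<bar>real n' - real n\<bar> * E" using n' by simp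
  finally show ?thesis .
next
  case False
  define m where "m = n - n'"
  have n: "n = n' + m" using False m_def by simp
  have "sum w {..<n'} - sum w {..<n} - (real n' - real n) * w n
      - \<beta> * ((real n' - real n) * (real n' - real n - 1) / 2)
      = -(\<Sum>i<m. w (n' + i) - w n - \<beta> * (real i - real m))"
  proof -
    have "sum w {..<n} = sum w {..<n'} + (\<Sum>i<m. w (n' + i))"
      using sum_lessThan_add_diff[of w n' m] n by simp
    moreover have "(\<Sum>i<m. w (n' + i) - w n - \<beta> * (real i - real m))
        = (\<Sum>i<m. w (n' + i)) - real m * w n - \<beta> * ((\<Sum>i<m. real i) - real m * real m)"
      by (simp add: sum_subtractf sum_distrib_left[symmetric])
    ultimately show ?thesis using n by (simp add: sum_lessThan_of_nat field_simps)
  qed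
  also have "\<bar>\<dots>\<bar> \<le> (\<Sum>i<m. E)"
    unfolding abs_minus_cancel
    using near[of "n' + _"] n by (intro order_trans[OF sum_abs] sum_mono) auto
  also have "\<dots> = \<bar>real n' - real n\<bar> * E" using n by simp
  finally show ?thesis .
qed

lemma between_abs_diff_le:
  "min n a \<le> j \<Longrightarrow> j < max n a \<Longrightarrow> \<bar>real j - real n\<bar> \<le> \<bar>real a - real n\<bar>"
  for n a j :: nat
  by (cases "n \<le> a") (auto simp: min_def max_def)

lemma partial_sum_bounds:
  fixes w :: "nat \<Rightarrow> real"
  assumes nonneg: "\<And>j. 0 \<le> w j" and vanish: "\<And>j. K \<le> j \<Longrightarrow> w j = 0"
  shows "0 \<le> sum w {..<n} \<and> sum w {..<n} \<le> sum w {..<K}"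
proof (induction n)
  case (Suc n)
  show ?case
  proof (cases "n < K")
    case True
    have "sum w {..<Suc n} \<le> sum w {..<K}" by (rule sum_mono2) (use True nonneg in auto)
    then show ?thesis using Suc nonneg[of n] by simp
  qed (use Suc vanish[of n] in simp)
qed (simp add: sum_nonneg nonneg)

lemma integrable_of_monotone_approx:
  fixes g :: "nat \<Rightarrow> 'a \<Rightarrow> real" and M :: "'a pmf"
  assumes nonneg: "\<And>k x. 0 \<le> g k x" and int: "\<And>k. integrable M (g k)"
    and bounded: "\<And>k. (\<integral>x. g k x \<partial>M) \<le> C"
    and mono: "\<And>k x. g k x \<le> g (Suc k) x" and below: "\<And>k x. g k x \<le> f x"
    and reached: "\<And>x. \<exists>k. g k x = f x"
  shows "integrable M f"
proof (rule integrableI_nonneg)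
  show "AE x in M. 0 \<le> f x" using nonneg below by (intro AE_I2) (meson order_trans)
  have sup: "(\<Squnion>k. ennreal (g k x)) = ennreal (f x)" for x
  proof (rule antisym)
    show "(\<Squnion>k. ennreal (g k x)) \<le> ennreal (f x)" using below by (auto intro!: SUP_least ennreal_leI)
    obtain k where "g k x = f x" using reached by blast
    then show "ennreal (f x) \<le> (\<Squnion>k. ennreal (g k x))" by (metis SUP_upper UNIV_I)
  qed
  have "(\<integral>\<^sup>+x. ennreal (f x) \<partial>M) = (\<Squnion>k. \<integral>\<^sup>+x. ennreal (g k x) \<partial>M)"
    unfolding sup[symmetric]
    by (rule nn_integral_monotone_convergence_SUP)
      (auto simp: incseq_Suc_iff le_fun_def mono intro!: ennreal_leI)
  also have "\<dots> \<le> ennreal C"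
    using bounded nn_integral_eq_integral[OF int] nonneg by (auto intro!: SUP_least ennreal_leI)
  finally show "(\<integral>\<^sup>+x. ennreal (f x) \<partial>M) < \<infinity>"
    using ennreal_less_top[of C] by (simp add: le_less_trans)
qed simp

lemma integral_pair_pmf_mult:
  fixes f g :: "nat \<Rightarrow> real"
  assumes "finite (set_pmf A)" "finite (set_pmf S)"
  shows "(\<integral>z. f (fst z) * g (snd z) \<partial>pair_pmf A S) = (\<integral>x. f x \<partial>A) * (\<integral>y. g y \<partial>S)"
proof -
  have "(\<integral>z. f (fst z) * g (snd z) \<partial>pair_pmf A S)
      = (\<Sum>z\<in>set_pmf A \<times> set_pmf S. f (fst z) * g (snd z) * pmf (pair_pmf A S) z)"
    by (rule integral_measure_pmf_real) (auto simp: assms)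
  also have "\<dots> = (\<Sum>(x, y)\<in>set_pmf A \<times> set_pmf S. (f x * pmf A x) * (g y * pmf S y))"
    by (intro sum.cong refl) (auto simp: pmf_pair algebra_simps)
  also have "\<dots> = (\<Sum>x\<in>set_pmf A. \<Sum>y\<in>set_pmf S. (f x * pmf A x) * (g y * pmf S y))"
    by (simp add: sum.cartesian_product)
  also have "\<dots> = (\<integral>x. f x \<partial>A) * (\<integral>y. g y \<partial>S)"
    by (simp add: sum_product integral_measure_pmf_real[OF assms(1)] integral_measure_pmf_real[OF assms(2)]
        mult.commute)
  finally show ?thesis .
qed

section \<open>The stationary queue\<close>

locale queue_model =
  fixes A S p :: "nat pmf" and \<epsilon> :: real and Amax Smax :: nat
  assumes stationary: "stationary_queue A S p"
    and arrivals_bdd: "set_pmf A \<subseteq> {..Amax}" and service_bdd: "set_pmf S \<subseteq> {..Smax}"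
    and mean_gap: "measure_pmf.expectation S real - measure_pmf.expectation A real = \<epsilon>"
    and eps_pos: "0 < \<epsilon>"
begin

abbreviation "P \<equiv> pair_pmf A S"

definition jump_bound :: nat where "jump_bound = Amax + Smax"

lemma finite_arrivals: "finite (set_pmf A)" using arrivals_bdd finite_subset by blast
lemma finite_service: "finite (set_pmf S)" using service_bdd finite_subset by blast

lemma integrable_input: "integrable (measure_pmf P) (f :: nat \<times> nat \<Rightarrow> real)"
  by (rule integrable_pair_pmf_finite[OF finite_arrivals finite_service])

lemma input_bounds: "z \<in> set_pmf P \<Longrightarrow> fst z \<le> Amax \<and> snd z \<le> Smax"
  using arrivals_bdd service_bdd by (auto simp: set_pair_pmf)

text \<open>For input \<open>z = (a, s)\<close>, the queue moves from \<open>n\<close> to \<open>n + a - s + u\<close>, where the unused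
  service \<open>u\<close> is nonzero only when \<open>n < s\<close>.\<close>
definition jump :: "nat \<Rightarrow> nat \<times> nat \<Rightarrow> real" where
  "jump n z = real (n + fst z - snd z) - real n"

definition unused :: "nat \<Rightarrow> nat \<times> nat \<Rightarrow> real" where
  "unused n z = real (n + fst z - snd z) - (real n + real (fst z) - real (snd z))"

definition mean_unused :: "nat \<Rightarrow> real" where
  "mean_unused n = (\<integral>z. unused n z \<partial>P)"

lemma jump_eq: "jump n z = (real (fst z) - real (snd z)) + unused n z"
  unfolding jump_def unused_def by simp

lemma abs_jump_le: "z \<in> set_pmf P \<Longrightarrow> \<bar>jump n z\<bar> \<le> real jump_bound"
  using input_bounds[of z] unfolding jump_def jump_bound_def
  by (cases z; cases "snd z \<le> n + fst z") (auto simp: of_nat_diff)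

lemma unused_bounds:
  "z \<in> set_pmf P \<Longrightarrow> 0 \<le> unused n z \<and> unused n z \<le> real Smax \<and> (Smax \<le> n \<longrightarrow> unused n z = 0)"
  using input_bounds[of z] unfolding unused_def
  by (cases z; cases "snd z \<le> n + fst z") (auto simp: of_nat_diff)

lemma mean_unused_bounds: "0 \<le> mean_unused n \<and> mean_unused n \<le> real Smax \<and> (Smax \<le> n \<longrightarrow> mean_unused n = 0)"
proof (intro conjI impI)
  show "0 \<le> mean_unused n"
    unfolding mean_unused_def by (intro integral_nonneg_AE AE_pmfI) (use unused_bounds in auto)
  have "mean_unused n \<le> (\<integral>z. real Smax \<partial>P)" unfolding mean_unused_def
    by (intro integral_mono_AE integrable_input AE_pmfI) (use unused_bounds in auto)
  then show "mean_unused n \<le> real Smax" by simp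
  assume "Smax \<le> n"
  then have "mean_unused n = (\<integral>z. 0 \<partial>P)" unfolding mean_unused_def
    by (intro integral_cong_AE AE_pmfI) (use unused_bounds in auto)
  then show "mean_unused n = 0" by simp
qed

lemma integrable_mean_unused: "integrable (measure_pmf p) mean_unused"
  by (rule measure_pmf.integrable_const_bound[where B="real Smax"]) (use mean_unused_bounds in auto)

lemma integral_net_input: "(\<integral>z. real (fst z) - real (snd z) \<partial>P) = - \<epsilon>"
  using mean_gap by (subst Bochner_Integration.integral_diff) (auto intro: integrable_input)

lemma integral_jump: "(\<integral>z. jump n z \<partial>P) = - \<epsilon> + mean_unused n"
  unfolding jump_eq mean_unused_def using integral_net_input
  by (subst Bochner_Integration.integral_add) (auto intro: integrable_input)

lemma eps_le_Smax: "\<epsilon> \<le> real Smax"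
proof -
  have "measure_pmf.expectation S real \<le> (\<integral>y. real Smax \<partial>S)"
    using service_bdd
    by (intro integral_mono_AE integrable_measure_pmf_finite[OF finite_service] AE_pmfI) auto
  then have "measure_pmf.expectation S real \<le> real Smax" by simp
  moreover have "0 \<le> measure_pmf.expectation A real" by simp
  ultimately show ?thesis using mean_gap by linarith
qed

lemma queue_step_mean_minus: "queue_step_mean A S \<phi> n - \<phi> n = (\<integral>z. \<phi> (n + fst z - snd z) - \<phi> n \<partial>P)"
  unfolding queue_step_mean_def by (subst Bochner_Integration.integral_diff) (auto intro: integrable_input)

lemma partial_sum_increment_le:
  fixes w :: "nat \<Rightarrow> real"
  assumes lip: "\<And>j. \<bar>real j - real n\<bar> \<le> real jump_bound \<Longrightarrow> \<bar>w j - w n\<bar> \<le> c * \<bar>real j - real n\<bar>"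
    and c_nonneg: "0 \<le> c" and z: "z \<in> set_pmf P"
  shows "sum w {..<n + fst z - snd z} - sum w {..<n} \<le> jump n z * w n + (real jump_bound)\<^sup>2 * c"
proof -
  let ?n' = "n + fst z - snd z"
  have dn: "real ?n' - real n = jump n z" unfolding jump_def by simp
  have dL: "\<bar>real ?n' - real n\<bar> \<le> real jump_bound" using abs_jump_le[OF z] dn by simp
  have "\<bar>sum w {..<?n'} - sum w {..<n} - (real ?n' - real n) * w n
      - 0 * ((real ?n' - real n) * (real ?n' - real n - 1) / 2)\<bar>
      \<le> \<bar>real ?n' - real n\<bar> * (c * real jump_bound)"
  proof (rule partial_sum_taylor)
    fix j assume "min n ?n' \<le> j" "j < max n ?n'"
    then have jl: "\<bar>real j - real n\<bar> \<le> real jump_bound"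
      using between_abs_diff_le dL by (meson order_trans)
    have "\<bar>w j - w n\<bar> \<le> c * \<bar>real j - real n\<bar>" by (rule lip[OF jl])
    also have "\<dots> \<le> c * real jump_bound" using jl c_nonneg by (intro mult_left_mono)
    finally show "\<bar>w j - w n - 0 * (real j - real n)\<bar> \<le> c * real jump_bound" by simp
  qed
  also have "\<dots> \<le> real jump_bound * (c * real jump_bound)"
    using dL c_nonneg by (intro mult_right_mono) auto
  finally have "\<bar>sum w {..<?n'} - sum w {..<n} - jump n z * w n\<bar> \<le> (real jump_bound)\<^sup>2 * c"
    unfolding dn by (simp add: power2_eq_square algebra_simps)
  then show ?thesis by linarith
qed

lemma queue_step_mean_partial_sum_le:
  fixes w :: "nat \<Rightarrow> real"
  assumes lip: "\<And>j. \<bar>real j - real n\<bar> \<le> real jump_bound \<Longrightarrow> \<bar>w j - w n\<bar> \<le> c * \<bar>real j - real n\<bar>"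
    and c_nonneg: "0 \<le> c"
  shows "queue_step_mean A S (\<lambda>m. sum w {..<m}) n - sum w {..<n}
    \<le> (- \<epsilon> + mean_unused n) * w n + (real jump_bound)\<^sup>2 * c"
proof -
  have "queue_step_mean A S (\<lambda>m. sum w {..<m}) n - sum w {..<n}
      = (\<integral>z. sum w {..<n + fst z - snd z} - sum w {..<n} \<partial>P)"
    using queue_step_mean_minus[of "\<lambda>m. sum w {..<m}" n] by simp
  also have "\<dots> \<le> (\<integral>z. jump n z * w n + (real jump_bound)\<^sup>2 * c \<partial>P)"
    by (intro integral_mono_AE integrable_input AE_pmfI partial_sum_increment_le[OF lip c_nonneg])
  also have "\<dots> = (- \<epsilon> + mean_unused n) * w n + (real jump_bound)\<^sup>2 * c"
    using integral_jump[of n] by (simp add: integrable_input)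
  finally show ?thesis .
qed

text \<open>The drift method: the potential \<open>\<Sum>\<^sub>j\<^sub><\<^sub>n w(j)\<close> has stationary mean drift zero, and
  its drift is about \<open>-\<epsilon> w(n)\<close> except at the boundary \<open>n < Smax\<close>, where service can be unused.\<close>
lemma drift_bound:
  fixes w lam :: "nat \<Rightarrow> real" and K :: nat and cw :: real
  assumes nonneg: "\<And>j. 0 \<le> w j" and vanish: "\<And>j. K \<le> j \<Longrightarrow> w j = 0"
    and lip: "\<And>n j. \<bar>real j - real n\<bar> \<le> real jump_bound \<Longrightarrow> \<bar>w j - w n\<bar> \<le> lam n * \<bar>real j - real n\<bar>"
    and lam_nonneg: "\<And>n. 0 \<le> lam n" and int_lam: "integrable (measure_pmf p) lam"
    and boundary: "\<And>n. n < Smax \<Longrightarrow> w n \<le> cw"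
  shows "\<epsilon> * (\<integral>n. w n \<partial>p) \<le> real Smax * cw + (real jump_bound)\<^sup>2 * (\<integral>n. lam n \<partial>p)"
proof -
  define \<phi> where "\<phi> n = sum w {..<n}" for n
  define B where "B = sum w {..<K}"
  have \<phi>_bound: "\<bar>\<phi> n\<bar> \<le> B" for n
    using partial_sum_bounds[of w K n, OF nonneg vanish] unfolding \<phi>_def B_def by auto
  have stat: "integrable (measure_pmf p) (queue_step_mean A S \<phi>)
      \<and> (\<integral>n. queue_step_mean A S \<phi> n \<partial>p) = (\<integral>n. \<phi> n \<partial>p)"
    by (rule stationary_integral_queue_step_mean[OF stationary finite_arrivals finite_service \<phi>_bound])
      simp
  have int_\<phi>: "integrable (measure_pmf p) \<phi>"
    by (rule measure_pmf.integrable_const_bound[where B=B]) (use \<phi>_bound in auto)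
  have w_bound: "\<bar>w n\<bar> \<le> B" for n
  proof (cases "n < K")
    case True
    then show ?thesis unfolding B_def using nonneg[of n] by (simp add: member_le_sum nonneg)
  next
    case False
    moreover have "0 \<le> B" unfolding B_def by (simp add: sum_nonneg nonneg)
    ultimately show ?thesis using vanish[of n] by simp
  qed
  have int_w: "integrable (measure_pmf p) w"
    by (rule measure_pmf.integrable_const_bound[where B=B]) (use w_bound in auto)
  have boundary_term: "mean_unused n * w n \<le> real Smax * cw" for n
  proof (cases "n < Smax")
    case True
    then show ?thesis using mean_unused_bounds[of n] boundary[OF True] nonneg[of n] by (intro mult_mono) auto
  next
    case False
    have "0 \<le> real Smax * cw" using boundary[of 0] nonneg[of 0] by (cases "Smax = 0") auto
    then show ?thesis using False mean_unused_bounds[of n] by simp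
  qed
  have step: "queue_step_mean A S \<phi> n - \<phi> n \<le> - \<epsilon> * w n + real Smax * cw + (real jump_bound)\<^sup>2 * lam n"
    for n
    using queue_step_mean_partial_sum_le[OF lip lam_nonneg, of n] boundary_term[of n]
    unfolding \<phi>_def by (simp add: algebra_simps)
  have "0 = (\<integral>n. queue_step_mean A S \<phi> n - \<phi> n \<partial>p)" using stat int_\<phi> by simp
  also have "\<dots> \<le> (\<integral>n. - \<epsilon> * w n + real Smax * cw + (real jump_bound)\<^sup>2 * lam n \<partial>p)"
    by (intro integral_mono) (use stat int_\<phi> int_w int_lam step in auto)
  also have "\<dots> = - \<epsilon> * (\<integral>n. w n \<partial>p) + real Smax * cw + (real jump_bound)\<^sup>2 * (\<integral>n. lam n \<partial>p)"
    using int_w int_lam by simp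
  finally show ?thesis by simp
qed

lemma abs_integral_le_of_queue_step_mean_approx:
  fixes \<phi> B X \<rho> :: "nat \<Rightarrow> real"
  assumes bound: "\<And>n. \<bar>\<phi> n\<bar> \<le> B n" and int_B: "integrable (measure_pmf p) B"
    and approx: "\<And>n. \<bar>queue_step_mean A S \<phi> n - \<phi> n - \<epsilon> * X n\<bar> \<le> \<rho> n"
    and int_\<rho>: "integrable (measure_pmf p) \<rho>"
  shows "integrable (measure_pmf p) X \<and> \<epsilon> * \<bar>\<integral>n. X n \<partial>p\<bar> \<le> (\<integral>n. \<rho> n \<partial>p)"
proof
  define R where "R n = queue_step_mean A S \<phi> n - \<phi> n - \<epsilon> * X n" for n
  have stat: "integrable (measure_pmf p) (queue_step_mean A S \<phi>)
      \<and> (\<integral>n. queue_step_mean A S \<phi> n \<partial>p) = (\<integral>n. \<phi> n \<partial>p)"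
    by (rule stationary_integral_queue_step_mean[OF stationary finite_arrivals finite_service bound int_B])
  have int_\<phi>: "integrable (measure_pmf p) \<phi>"
    by (rule Bochner_Integration.integrable_bound[OF int_B])
      (auto intro!: AE_I2 order_trans[OF bound abs_ge_self])
  have R_bound: "\<bar>R n\<bar> \<le> \<rho> n" for n unfolding R_def by (rule approx)
  have int_R: "integrable (measure_pmf p) R"
    by (rule Bochner_Integration.integrable_bound[OF int_\<rho>])
      (auto intro!: AE_I2 order_trans[OF R_bound abs_ge_self])
  have "X = (\<lambda>n. (queue_step_mean A S \<phi> n - \<phi> n - R n) / \<epsilon>)"
    unfolding R_def using eps_pos by (simp add: fun_eq_iff)
  then show int_X: "integrable (measure_pmf p) X" using stat int_\<phi> int_R by simp
  have "0 = (\<integral>n. queue_step_mean A S \<phi> n - \<phi> n \<partial>p)" using stat int_\<phi> by simp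
  also have "\<dots> = (\<integral>n. \<epsilon> * X n + R n \<partial>p)" unfolding R_def by simp
  also have "\<dots> = \<epsilon> * (\<integral>n. X n \<partial>p) + (\<integral>n. R n \<partial>p)" using int_X int_R by simp
  finally have "\<epsilon> * (\<integral>n. X n \<partial>p) = - (\<integral>n. R n \<partial>p)" by linarith
  then have "\<epsilon> * \<bar>\<integral>n. X n \<partial>p\<bar> = \<bar>\<integral>n. R n \<partial>p\<bar>"
    using eps_pos by (metis abs_minus_cancel abs_mult abs_of_pos)
  also have "\<dots> \<le> (\<integral>n. \<rho> n \<partial>p)"
    by (rule order_trans[OF integral_abs_bound], rule integral_mono) (use int_R int_\<rho> R_bound in auto)
  finally show "\<epsilon> * \<bar>\<integral>n. X n \<partial>p\<bar> \<le> (\<integral>n. \<rho> n \<partial>p)" .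
qed

end

definition tent :: "nat \<Rightarrow> nat \<Rightarrow> real" where
  "tent M n = real (min n (2 * M - n))"

lemma tent_lipschitz: "\<bar>tent M j - tent M n\<bar> \<le> \<bar>real j - real n\<bar>"
  unfolding tent_def by (auto simp: min_def abs_if split: if_splits)

lemma tent_bounds: "0 \<le> tent M n" "tent M n \<le> real n" "tent M n \<le> real (2 * M)"
  unfolding tent_def by auto

lemma tent_vanish: "2 * M \<le> n \<Longrightarrow> tent M n = 0"
  unfolding tent_def by auto

lemma tent_mono: "tent M n \<le> tent (Suc M) n"
  unfolding tent_def by auto

lemma tent_self: "tent n n = real n"
  unfolding tent_def by auto

text \<open>Finite moments: the drift bound for the truncations \<open>tent M\<close> of \<open>n\<close> and \<open>n\<^sup>2\<close> is
  uniform in \<open>M\<close>.\<close>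
context queue_model
begin

lemma integrable_queue_length: "integrable (measure_pmf p) (\<lambda>n. real n)"
proof (rule integrable_of_monotone_approx[where g=tent])
  fix M
  have "\<epsilon> * (\<integral>n. tent M n \<partial>p) \<le> real Smax * real Smax + (real jump_bound)\<^sup>2 * (\<integral>n. 1 \<partial>p)"
  proof (rule drift_bound[where K="2 * M"])
    show "tent M n \<le> real Smax" if "n < Smax" for n
      using tent_bounds(2)[of M n] that by linarith
  qed (use tent_bounds tent_vanish tent_lipschitz in auto)
  then show "(\<integral>n. tent M n \<partial>p) \<le> (real Smax * real Smax + (real jump_bound)\<^sup>2) / \<epsilon>"
    using eps_pos by (simp add: field_simps)
  show "integrable (measure_pmf p) (tent M)"
    by (rule measure_pmf.integrable_const_bound[where B="real (2 * M)"]) (use tent_bounds in auto)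
  show "\<exists>k. tent k n = real n" for n using tent_self by blast
qed (use tent_bounds tent_mono in auto)

lemma integrable_queue_length_sq: "integrable (measure_pmf p) (\<lambda>n. (real n)\<^sup>2)"
proof (rule integrable_of_monotone_approx[where g="\<lambda>M n. (tent M n)\<^sup>2"])
  fix M
  have "\<epsilon> * (\<integral>n. (tent M n)\<^sup>2 \<partial>p)
      \<le> real Smax * (real Smax)\<^sup>2 + (real jump_bound)\<^sup>2 * (\<integral>n. 2 * real n + real jump_bound \<partial>p)"
  proof (rule drift_bound[where K="2 * M"])
    fix n j assume jl: "\<bar>real j - real n\<bar> \<le> real jump_bound"
    have t: "\<bar>tent M j - tent M n\<bar> \<le> \<bar>real j - real n\<bar>" by (rule tent_lipschitz)
    have "(tent M j)\<^sup>2 - (tent M n)\<^sup>2 = (tent M j - tent M n) * (tent M j + tent M n)"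
      by (simp add: power2_eq_square algebra_simps)
    then have "\<bar>(tent M j)\<^sup>2 - (tent M n)\<^sup>2\<bar> = \<bar>tent M j - tent M n\<bar> * (tent M j + tent M n)"
      using tent_bounds(1)[of M j] tent_bounds(1)[of M n] by (simp add: abs_mult)
    also have "\<dots> \<le> \<bar>real j - real n\<bar> * (2 * real n + real jump_bound)"
      using t jl tent_bounds[of M n] tent_bounds(1)[of M j] by (intro mult_mono) auto
    finally show "\<bar>(tent M j)\<^sup>2 - (tent M n)\<^sup>2\<bar> \<le> (2 * real n + real jump_bound) * \<bar>real j - real n\<bar>"
      by (simp add: mult.commute)
  next
    show "integrable (measure_pmf p) (\<lambda>n. 2 * real n + real jump_bound)"
      using integrable_queue_length by simp
    show "(tent M n)\<^sup>2 \<le> (real Smax)\<^sup>2" if "n < Smax" for n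
      using tent_bounds[of M n] that by (intro power_mono) auto
  qed (use tent_vanish in auto)
  then show "(\<integral>n. (tent M n)\<^sup>2 \<partial>p)
      \<le> (real Smax * (real Smax)\<^sup>2 + (real jump_bound)\<^sup>2 * (\<integral>n. 2 * real n + real jump_bound \<partial>p)) / \<epsilon>"
    using eps_pos by (simp add: field_simps)
  show "integrable (measure_pmf p) (\<lambda>n. (tent M n)\<^sup>2)"
  proof (rule measure_pmf.integrable_const_bound[where B="(real (2 * M))\<^sup>2"])
    show "AE n in measure_pmf p. norm ((tent M n)\<^sup>2) \<le> (real (2 * M))\<^sup>2"
      using tent_bounds(1,3)[of M] by (intro AE_I2) (simp add: power_mono del: of_nat_mult)
  qed simp
  show "\<exists>k. (tent k n)\<^sup>2 = (real n)\<^sup>2" for n using tent_self by metis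
qed (use tent_bounds tent_mono in \<open>auto intro: power_mono\<close>)

text \<open>Stationarity tested with \<open>n\<close> itself.\<close>
lemma integral_mean_unused: "(\<integral>n. mean_unused n \<partial>p) = \<epsilon>"
proof -
  have stat: "integrable (measure_pmf p) (queue_step_mean A S real)
      \<and> (\<integral>n. queue_step_mean A S real n \<partial>p) = (\<integral>n. real n \<partial>p)"
    by (rule stationary_integral_queue_step_mean[OF stationary finite_arrivals finite_service _
          integrable_queue_length]) simp
  have step: "queue_step_mean A S real n = real n - \<epsilon> + mean_unused n" for n
  proof -
    have "queue_step_mean A S real n = (\<integral>z. real n + jump n z \<partial>P)"
      unfolding queue_step_mean_def jump_def by simp
    also have "\<dots> = real n + (- \<epsilon> + mean_unused n)" using integral_jump[of n] by (simp add: integrable_input)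
    finally show ?thesis by simp
  qed
  have "(\<integral>n. real n - \<epsilon> + mean_unused n \<partial>p) = (\<integral>n. real n \<partial>p) - \<epsilon> + (\<integral>n. mean_unused n \<partial>p)"
    using integrable_queue_length integrable_mean_unused by simp
  then show ?thesis using stat unfolding step by simp
qed

lemma integral_net_input_sq:
  "(\<integral>z. (real (fst z) - real (snd z))\<^sup>2 \<partial>P)
   = measure_pmf.variance A real + measure_pmf.variance S real + \<epsilon>\<^sup>2"
proof -
  let ?mA = "measure_pmf.expectation A real" and ?mS = "measure_pmf.expectation S real"
  have int_A: "integrable (measure_pmf A) (f :: nat \<Rightarrow> real)" for f
    by (rule integrable_measure_pmf_finite[OF finite_arrivals])
  have int_S: "integrable (measure_pmf S) (f :: nat \<Rightarrow> real)" for f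
    by (rule integrable_measure_pmf_finite[OF finite_service])
  have "(\<lambda>z. (real (fst z) - real (snd z))\<^sup>2)
      = (\<lambda>z. (real (fst z))\<^sup>2 - 2 * (real (fst z) * real (snd z)) + (real (snd z))\<^sup>2)"
    by (simp add: power2_diff algebra_simps)
  then have "(\<integral>z. (real (fst z) - real (snd z))\<^sup>2 \<partial>P)
      = (\<integral>x. (real x)\<^sup>2 \<partial>A) - 2 * (?mA * ?mS) + (\<integral>y. (real y)\<^sup>2 \<partial>S)"
    using integral_pair_pmf_mult[OF finite_arrivals finite_service, of real real]
      expectation_pair_pmf_fst[of A S "\<lambda>x. (real x)\<^sup>2"] expectation_pair_pmf_snd[of A S "\<lambda>x. (real x)\<^sup>2"]
    by (simp add: integrable_input)
  moreover have "measure_pmf.variance A real = (\<integral>x. (real x)\<^sup>2 \<partial>A) - ?mA\<^sup>2"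
    using measure_pmf.variance_eq[OF int_A int_A] by simp
  moreover have "measure_pmf.variance S real = (\<integral>x. (real x)\<^sup>2 \<partial>S) - ?mS\<^sup>2"
    using measure_pmf.variance_eq[OF int_S int_S] by simp
  moreover have "\<epsilon>\<^sup>2 = ?mS\<^sup>2 + ?mA\<^sup>2 - 2 * (?mA * ?mS)"
    unfolding mean_gap[symmetric] by (simp add: power2_diff algebra_simps)
  ultimately show ?thesis by linarith
qed

definition unused_correction :: "nat \<Rightarrow> real" where
  "unused_correction n = (\<integral>z. unused n z * (2 * (real (fst z) - real (snd z)) + unused n z - 1) \<partial>P)"

lemma integral_jump_falling:
  "(\<integral>z. jump n z * (jump n z - 1) \<partial>P)
   = measure_pmf.variance A real + measure_pmf.variance S real + \<epsilon>\<^sup>2 + \<epsilon> + unused_correction n"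
proof -
  have "jump n z * (jump n z - 1) = (real (fst z) - real (snd z))\<^sup>2 - (real (fst z) - real (snd z))
       + unused n z * (2 * (real (fst z) - real (snd z)) + unused n z - 1)" for z
    unfolding jump_eq by (simp add: power2_eq_square algebra_simps)
  then show ?thesis
    unfolding unused_correction_def using integral_net_input_sq integral_net_input
    by (simp add: integrable_input)
qed

lemma abs_unused_correction_le: "\<bar>unused_correction n\<bar> \<le> (3 * real jump_bound + 1) * mean_unused n"
proof -
  have "\<bar>unused_correction n\<bar>
      \<le> (\<integral>z. \<bar>unused n z * (2 * (real (fst z) - real (snd z)) + unused n z - 1)\<bar> \<partial>P)"
    unfolding unused_correction_def by (rule integral_abs_bound)
  also have "\<dots> \<le> (\<integral>z. (3 * real jump_bound + 1) * unused n z \<partial>P)"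
  proof (intro integral_mono_AE integrable_input AE_pmfI)
    fix z assume z: "z \<in> set_pmf P"
    have u: "0 \<le> unused n z" "unused n z \<le> real Smax" using unused_bounds[OF z] by auto
    then have "\<bar>2 * (real (fst z) - real (snd z)) + unused n z - 1\<bar> \<le> 3 * real jump_bound + 1"
      using input_bounds[OF z] unfolding jump_bound_def by (simp add: abs_le_iff)
    then show "\<bar>unused n z * (2 * (real (fst z) - real (snd z)) + unused n z - 1)\<bar>
        \<le> (3 * real jump_bound + 1) * unused n z"
      using u by (simp add: abs_mult mult.commute mult_left_mono)
  qed
  also have "\<dots> = (3 * real jump_bound + 1) * mean_unused n"
    unfolding mean_unused_def by (simp add: integrable_input)
  finally show ?thesis .
qed

section \<open>Stein's method for the stationary queue\<close>

definition stein_potential :: "real \<Rightarrow> (real \<Rightarrow> real) \<Rightarrow> nat \<Rightarrow> real" where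
  "stein_potential l h n = (\<Sum>j<n. stein_solution l h (\<epsilon> * real j))"

definition taylor_constant :: "real \<Rightarrow> real" where
  "taylor_constant T = 2 * T * exp (T * (real Smax * real jump_bound)) + 2 * T"

context
  fixes l T :: real and h :: "real \<Rightarrow> real"
  assumes l_pos: "0 < l" and l_le_T: "l \<le> T" and h_lip: "1-lipschitz_on UNIV h"
begin

lemma taylor_constant_nonneg: "0 \<le> taylor_constant T"
  unfolding taylor_constant_def using l_pos l_le_T by simp

lemma stein_potential_increment:
  assumes z: "z \<in> set_pmf P"
  shows "\<bar>stein_potential l h (n + fst z - snd z) - stein_potential l h n
      - jump n z * stein_solution l h (\<epsilon> * real n)
      - \<epsilon> * stein_derivative l h (\<epsilon> * real n) * (jump n z * (jump n z - 1) / 2)\<bar>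
    \<le> \<epsilon>\<^sup>2 * ((real jump_bound)^3 * taylor_constant T)"
proof -
  let ?n' = "n + fst z - snd z" and ?L = "real jump_bound" and ?C = "taylor_constant T"
  have dn: "real ?n' - real n = jump n z" unfolding jump_def by simp
  have dL: "\<bar>real ?n' - real n\<bar> \<le> ?L" using abs_jump_le[OF z] dn by simp
  have "\<bar>stein_potential l h ?n' - stein_potential l h n - (real ?n' - real n) * stein_solution l h (\<epsilon> * real n)
      - (\<epsilon> * stein_derivative l h (\<epsilon> * real n)) * ((real ?n' - real n) * (real ?n' - real n - 1) / 2)\<bar>
      \<le> \<bar>real ?n' - real n\<bar> * (?C * (\<epsilon> * ?L)\<^sup>2)"
    unfolding stein_potential_def
  proof (rule partial_sum_taylor)
    fix j assume "min n ?n' \<le> j" "j < max n ?n'"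
    then have jl: "\<bar>real j - real n\<bar> \<le> ?L" using between_abs_diff_le dL by (meson order_trans)
    have scaled: "\<bar>\<epsilon> * real j - \<epsilon> * real n\<bar> \<le> \<epsilon> * ?L"
      using jl eps_pos by (simp add: abs_mult flip: right_diff_distrib)
    also have "\<dots> \<le> real Smax * ?L" using eps_le_Smax by (simp add: mult_right_mono)
    finally have "\<bar>stein_solution l h (\<epsilon> * real j) - stein_solution l h (\<epsilon> * real n)
        - stein_derivative l h (\<epsilon> * real n) * (\<epsilon> * real j - \<epsilon> * real n)\<bar>
        \<le> ?C * (\<epsilon> * real j - \<epsilon> * real n)\<^sup>2"
      unfolding taylor_constant_def by (rule stein_solution_taylor[OF l_pos h_lip _ l_le_T])
    also have "\<dots> \<le> ?C * (\<epsilon> * ?L)\<^sup>2"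
      using scaled taylor_constant_nonneg
      by (intro mult_left_mono) (metis abs_ge_zero power2_abs power_mono)
    finally show "\<bar>stein_solution l h (\<epsilon> * real j) - stein_solution l h (\<epsilon> * real n)
        - \<epsilon> * stein_derivative l h (\<epsilon> * real n) * (real j - real n)\<bar> \<le> ?C * (\<epsilon> * ?L)\<^sup>2"
      by (simp add: algebra_simps)
  qed
  also have "\<dots> \<le> ?L * (?C * (\<epsilon> * ?L)\<^sup>2)"
    using dL taylor_constant_nonneg by (intro mult_right_mono) auto
  also have "\<dots> = \<epsilon>\<^sup>2 * (?L^3 * ?C)" by (simp add: power2_eq_square power3_eq_cube)
  finally show ?thesis unfolding dn .
qed

lemma queue_step_mean_stein_potential:
  "\<bar>queue_step_mean A S (stein_potential l h) n - stein_potential l h n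
      - (stein_solution l h (\<epsilon> * real n) * (- \<epsilon> + mean_unused n)
        + \<epsilon> * stein_derivative l h (\<epsilon> * real n) / 2
          * (measure_pmf.variance A real + measure_pmf.variance S real + \<epsilon>\<^sup>2 + \<epsilon> + unused_correction n))\<bar>
    \<le> \<epsilon>\<^sup>2 * ((real jump_bound)^3 * taylor_constant T)"
proof -
  let ?F = "stein_potential l h" and ?G = "stein_solution l h (\<epsilon> * real n)"
    and ?\<Psi> = "\<epsilon> * stein_derivative l h (\<epsilon> * real n) / 2"
  define e where "e z = ?F (n + fst z - snd z) - ?F n - jump n z * ?G - ?\<Psi> * (jump n z * (jump n z - 1))"
    for z
  have "queue_step_mean A S ?F n - ?F n
      = (\<integral>z. jump n z * ?G + ?\<Psi> * (jump n z * (jump n z - 1)) + e z \<partial>P)"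
    unfolding queue_step_mean_minus e_def by simp
  also have "\<dots> = (\<integral>z. jump n z \<partial>P) * ?G + ?\<Psi> * (\<integral>z. jump n z * (jump n z - 1) \<partial>P) + (\<integral>z. e z \<partial>P)"
    by (simp add: integrable_input)
  finally have "queue_step_mean A S ?F n - ?F n
      - (?G * (- \<epsilon> + mean_unused n)
        + ?\<Psi> * (measure_pmf.variance A real + measure_pmf.variance S real + \<epsilon>\<^sup>2 + \<epsilon> + unused_correction n))
      = (\<integral>z. e z \<partial>P)"
    unfolding integral_jump integral_jump_falling by (simp add: algebra_simps)
  also have "\<bar>\<dots>\<bar> \<le> (\<integral>z. \<epsilon>\<^sup>2 * ((real jump_bound)^3 * taylor_constant T) \<partial>P)"
    using stein_potential_increment unfolding e_def
    by (intro order_trans[OF integral_abs_bound] integral_mono_AE integrable_input AE_pmfI)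
      (simp add: algebra_simps)
  finally show ?thesis by simp
qed

lemma queue_step_mean_stein_potential_approx:
  assumes variance_sum: "measure_pmf.variance A real + measure_pmf.variance S real = 2 / l"
  shows "\<bar>queue_step_mean A S (stein_potential l h) n - stein_potential l h n
      - \<epsilon> * (h (\<epsilon> * real n) - exp_expectation l h)\<bar>
    \<le> \<epsilon> * real Smax * mean_unused n + \<epsilon> / 2 * (\<epsilon>\<^sup>2 + \<epsilon> + (3 * real jump_bound + 1) * mean_unused n)
      + \<epsilon>\<^sup>2 * ((real jump_bound)^3 * taylor_constant T)"
proof -
  let ?G = "stein_solution l h (\<epsilon> * real n)" and ?\<Psi> = "stein_derivative l h (\<epsilon> * real n)"
    and ?D = "queue_step_mean A S (stein_potential l h) n - stein_potential l h n
      - \<epsilon> * (h (\<epsilon> * real n) - exp_expectation l h)"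
  have u: "0 \<le> mean_unused n" "mean_unused n \<le> real Smax" using mean_unused_bounds[of n] by auto
  define V where "V = measure_pmf.variance A real + measure_pmf.variance S real"
  have stein: "\<epsilon> * (h (\<epsilon> * real n) - exp_expectation l h) = - \<epsilon> * ?G + \<epsilon> * ?\<Psi> / 2 * V"
    unfolding stein_equation[OF l_pos h_lip, symmetric] V_def variance_sum using l_pos
    by (simp add: field_simps)
  have "queue_step_mean A S (stein_potential l h) n - stein_potential l h n
      - \<epsilon> * (h (\<epsilon> * real n) - exp_expectation l h)
      - (?G * mean_unused n + \<epsilon> * ?\<Psi> / 2 * (\<epsilon>\<^sup>2 + \<epsilon> + unused_correction n))
    = queue_step_mean A S (stein_potential l h) n - stein_potential l h n
      - (?G * (- \<epsilon> + mean_unused n) + \<epsilon> * ?\<Psi> / 2 * (V + \<epsilon>\<^sup>2 + \<epsilon> + unused_correction n))"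
    unfolding stein by (simp add: algebra_simps)
  then have "\<bar>queue_step_mean A S (stein_potential l h) n - stein_potential l h n
      - \<epsilon> * (h (\<epsilon> * real n) - exp_expectation l h)
      - (?G * mean_unused n + \<epsilon> * ?\<Psi> / 2 * (\<epsilon>\<^sup>2 + \<epsilon> + unused_correction n))\<bar>
    \<le> \<epsilon>\<^sup>2 * ((real jump_bound)^3 * taylor_constant T)"
    using queue_step_mean_stein_potential[of n] unfolding V_def by (simp only: add.assoc)
  moreover have "\<bar>?G * mean_unused n\<bar> \<le> \<epsilon> * real Smax * mean_unused n"
  proof (cases "n < Smax")
    case True
    have "\<bar>?G\<bar> \<le> \<epsilon> * real n"
      using abs_stein_solution_le[OF l_pos h_lip, of "\<epsilon> * real n"] eps_pos by simp
    also have "\<dots> \<le> \<epsilon> * real Smax" using True eps_pos by simp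
    finally have "\<bar>?G\<bar> \<le> \<epsilon> * real Smax" .
    then show ?thesis using u by (simp add: abs_mult mult_right_mono)
  qed (use mean_unused_bounds[of n] in simp)
  moreover have "\<bar>\<epsilon> * ?\<Psi> / 2 * (\<epsilon>\<^sup>2 + \<epsilon> + unused_correction n)\<bar>
      \<le> \<epsilon> / 2 * (\<epsilon>\<^sup>2 + \<epsilon> + (3 * real jump_bound + 1) * mean_unused n)"
  proof -
    have "\<bar>\<epsilon>\<^sup>2 + \<epsilon> + unused_correction n\<bar> \<le> \<epsilon>\<^sup>2 + \<epsilon> + (3 * real jump_bound + 1) * mean_unused n"
      using abs_unused_correction_le[of n] eps_pos zero_le_power2[of \<epsilon>] unfolding abs_le_iff by linarith
    moreover have "\<bar>\<epsilon> * ?\<Psi> / 2\<bar> \<le> \<epsilon> / 2"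
      using abs_stein_derivative_le[OF l_pos h_lip] eps_pos by (simp add: abs_mult mult_left_le)
    ultimately show ?thesis unfolding abs_mult by (intro mult_mono) auto
  qed
  moreover have "\<bar>?D\<bar> \<le> \<bar>?D - (?G * mean_unused n + \<epsilon> * ?\<Psi> / 2 * (\<epsilon>\<^sup>2 + \<epsilon> + unused_correction n))\<bar>
      + \<bar>?G * mean_unused n\<bar> + \<bar>\<epsilon> * ?\<Psi> / 2 * (\<epsilon>\<^sup>2 + \<epsilon> + unused_correction n)\<bar>"
    using abs_triangle_ineq2[of ?D "?G * mean_unused n + \<epsilon> * ?\<Psi> / 2 * (\<epsilon>\<^sup>2 + \<epsilon> + unused_correction n)"]
      abs_triangle_ineq[of "?G * mean_unused n" "\<epsilon> * ?\<Psi> / 2 * (\<epsilon>\<^sup>2 + \<epsilon> + unused_correction n)"]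
    by linarith
  ultimately show ?thesis by linarith
qed

lemma abs_stein_potential_le: "\<bar>stein_potential l h n\<bar> \<le> \<epsilon> * (real n)\<^sup>2"
proof -
  have "\<bar>stein_solution l h (\<epsilon> * real j)\<bar> \<le> \<epsilon> * real n" if "j < n" for j
  proof -
    have "\<bar>stein_solution l h (\<epsilon> * real j)\<bar> \<le> \<epsilon> * real j"
      using abs_stein_solution_le[OF l_pos h_lip, of "\<epsilon> * real j"] eps_pos by simp
    also have "\<dots> \<le> \<epsilon> * real n" using that eps_pos by simp
    finally show ?thesis .
  qed
  then have "\<bar>stein_potential l h n\<bar> \<le> (\<Sum>j<n. \<epsilon> * real n)"
    unfolding stein_potential_def by (intro order_trans[OF sum_abs] sum_mono) auto
  then show ?thesis by (simp add: power2_eq_square algebra_simps)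
qed

lemma stein_bound:
  assumes variance_sum: "measure_pmf.variance A real + measure_pmf.variance S real = 2 / l"
  shows "\<bar>(\<integral>n. h (\<epsilon> * real n) \<partial>p) - exp_expectation l h\<bar>
    \<le> \<epsilon> * (real Smax + (real Smax + 3 * real jump_bound + 2) / 2 + (real jump_bound)^3 * taylor_constant T)"
proof -
  let ?L = "real jump_bound" and ?C = "taylor_constant T"
  define \<rho> where "\<rho> n = \<epsilon> * real Smax * mean_unused n
      + \<epsilon> / 2 * (\<epsilon>\<^sup>2 + \<epsilon> + (3 * ?L + 1) * mean_unused n) + \<epsilon>\<^sup>2 * (?L^3 * ?C)" for n
  have approx: "\<bar>queue_step_mean A S (stein_potential l h) n - stein_potential l h n
      - \<epsilon> * (h (\<epsilon> * real n) - exp_expectation l h)\<bar> \<le> \<rho> n" for n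
    unfolding \<rho>_def by (rule queue_step_mean_stein_potential_approx[OF variance_sum])
  have "integrable (measure_pmf p) (\<lambda>n. h (\<epsilon> * real n) - exp_expectation l h)
      \<and> \<epsilon> * \<bar>\<integral>n. h (\<epsilon> * real n) - exp_expectation l h \<partial>p\<bar> \<le> (\<integral>n. \<rho> n \<partial>p)"
    by (rule abs_integral_le_of_queue_step_mean_approx[OF abs_stein_potential_le _ approx])
      (use integrable_queue_length_sq integrable_mean_unused in \<open>simp_all add: \<rho>_def\<close>)
  then have "integrable (measure_pmf p) (\<lambda>n. h (\<epsilon> * real n))"
    and "\<epsilon> * \<bar>(\<integral>n. h (\<epsilon> * real n) \<partial>p) - exp_expectation l h\<bar> \<le> (\<integral>n. \<rho> n \<partial>p)"
    using Bochner_Integration.integrable_add[of p "\<lambda>n. h (\<epsilon> * real n) - exp_expectation l h"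
        "\<lambda>_. exp_expectation l h"]
    by auto
  moreover have "(\<integral>n. \<rho> n \<partial>p) = \<epsilon> * (\<epsilon> * (real Smax + (\<epsilon> + 3 * ?L + 2) / 2 + ?L^3 * ?C))"
    unfolding \<rho>_def using integrable_mean_unused integral_mean_unused
    by (simp add: power2_eq_square algebra_simps)
  ultimately have "\<bar>(\<integral>n. h (\<epsilon> * real n) \<partial>p) - exp_expectation l h\<bar>
      \<le> \<epsilon> * (real Smax + (\<epsilon> + 3 * ?L + 2) / 2 + ?L^3 * ?C)"
    using eps_pos by (simp add: mult_le_cancel_left_pos)
  also have "\<dots> \<le> \<epsilon> * (real Smax + (real Smax + 3 * ?L + 2) / 2 + ?L^3 * ?C)"
    using eps_pos eps_le_Smax by (intro mult_left_mono) auto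
  finally show ?thesis .
qed

end

lemma wasserstein_stationary_exponential_le:
  assumes "0 < l" and "l \<le> T"
    and "measure_pmf.variance A real + measure_pmf.variance S real = 2 / l"
  shows "wasserstein (distr (measure_pmf p) borel (\<lambda>q. \<epsilon> * real q)) (density lborel (exponential_density l))
    \<le> ereal ((real Smax + (real Smax + 3 * real jump_bound + 2) / 2
        + (real jump_bound)^3 * taylor_constant T) * \<epsilon>)"
proof (rule wasserstein_le_of_lipschitz1_bound)
  fix h :: "real \<Rightarrow> real" assume h: "1-lipschitz_on UNIV h"
  then have "h \<in> borel_measurable borel" by (rule lipschitz1_borel_measurable)
  then show "\<bar>(\<integral>x. h x \<partial>distr (measure_pmf p) borel (\<lambda>q. \<epsilon> * real q))
      - (\<integral>x. h x \<partial>density lborel (exponential_density l))\<bar>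
    \<le> (real Smax + (real Smax + 3 * real jump_bound + 2) / 2 + (real jump_bound)^3 * taylor_constant T) * \<epsilon>"
    using stein_bound[OF assms(1,2) h assms(3)]
    by (simp add: integral_distr integral_exponential_density_eq_exp_expectation[OF assms(1)] mult.commute)
qed

end

theorem theorem1:
  fixes \<mu> c0 :: real and Amax Smax :: nat
    and s :: "nat pmf" and a :: "real \<Rightarrow> nat pmf" and qbar :: "real \<Rightarrow> nat pmf"
  assumes mu_pos: "\<mu> > 0"
    and s_mean: "measure_pmf.expectation s (\<lambda>n. real n) = \<mu>"
    and s_bdd: "set_pmf s \<subseteq> {..Smax}"
    and a_mean: "\<And>\<epsilon>. 0 < \<epsilon> \<Longrightarrow> \<epsilon> < \<mu> \<Longrightarrow> measure_pmf.expectation (a \<epsilon>) (\<lambda>n. real n) = \<mu> - \<epsilon>"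
    and a_bdd: "\<And>\<epsilon>. 0 < \<epsilon> \<Longrightarrow> \<epsilon> < \<mu> \<Longrightarrow> set_pmf (a \<epsilon>) \<subseteq> {..Amax}"
    and c0_pos: "c0 > 0"
    and var_lb: "\<And>\<epsilon>. 0 < \<epsilon> \<Longrightarrow> \<epsilon> < \<mu> \<Longrightarrow>
       measure_pmf.variance (a \<epsilon>) (\<lambda>n. real n) + measure_pmf.variance s (\<lambda>n. real n) \<ge> c0"
    and stat: "\<And>\<epsilon>. 0 < \<epsilon> \<Longrightarrow> \<epsilon> < \<mu> \<Longrightarrow> stationary_queue (a \<epsilon>) s (qbar \<epsilon>)"
  shows "\<exists>K::real. \<forall>\<epsilon>. 0 < \<epsilon> \<and> \<epsilon> < \<mu> \<longrightarrow>
     wasserstein (distr (measure_pmf (qbar \<epsilon>)) borel (\<lambda>q. \<epsilon> * real q))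
       (density lborel (exponential_density
          (2 / (measure_pmf.variance (a \<epsilon>) (\<lambda>n. real n) + measure_pmf.variance s (\<lambda>n. real n)))))
     \<le> ereal (K * \<epsilon>)"
proof -
  define T where "T = 2 / c0"
  define K where "K = real Smax + (real Smax + 3 * real (Amax + Smax) + 2) / 2
    + real (Amax + Smax) ^ 3 * (2 * T * exp (T * (real Smax * real (Amax + Smax))) + 2 * T)"
  show ?thesis
  proof (intro exI[of _ K] allI impI)
    fix \<epsilon> :: real assume \<epsilon>: "0 < \<epsilon> \<and> \<epsilon> < \<mu>"
    define V where "V = measure_pmf.variance (a \<epsilon>) real + measure_pmf.variance s real"
    interpret queue_model "a \<epsilon>" s "qbar \<epsilon>" \<epsilon> Amax Smax
      by unfold_locales (use \<epsilon> stat a_bdd s_bdd a_mean s_mean in auto)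
    have "c0 \<le> V" unfolding V_def using var_lb \<epsilon> by auto
    then have "0 < 2 / V" and "2 / V \<le> T" and "V = 2 / (2 / V)"
      unfolding T_def using c0_pos by (auto simp: frac_le)
    then show "wasserstein (distr (measure_pmf (qbar \<epsilon>)) borel (\<lambda>q. \<epsilon> * real q))
       (density lborel (exponential_density
          (2 / (measure_pmf.variance (a \<epsilon>) (\<lambda>n. real n) + measure_pmf.variance s (\<lambda>n. real n)))))
       \<le> ereal (K * \<epsilon>)"
      using wasserstein_stationary_exponential_le[of "2 / V" T]
      unfolding V_def K_def taylor_constant_def jump_bound_def by simp
  qed
qed

end
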